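(* Let $V$ be a finite set, $E\subset V\times V$ a set of directed edges without self-loops such that every vertex has at most one outgoing edge, and let real weights $\omega_v$ ($v\in V$), $\omega_{vw}$ ($v\ne w\in V$) and $B$ satisfy: (i) $\omega_v>\omega_{vw}$ for $(v,w)\in E$; (ii) $\omega_{uv}>\omega_{vw}$ whenever $(u,v),(v,w)\in E$; (iii) $\omega_{vw}=B$ whenever $v\neq w$, $(v,w)\notin E$ and $(w,v)\notin E$; (iv) $\omega_{vw}=\omega_{wv}$ for all $v\ne w$; (v) $B>\max\{\max_{v}\omega_v,\max_{(v,w)\in E}\omega_{vw}\}$. Let $S=\operatorname{conv}\{e_v:v\in V\}\subset\mathbb{R}^V$ (standard basis vectors) and let $\ell:S\to\mathbb{R}$ satisfy $\ell(e_v)=\omega_v$ for $v\in V$, $\ell(\tfrac12(e_v+e_w))=\omega_{vw}$ for $v\ne w$, and $\ell$ affine on each corner $S_v^{1/2}$, $v\in V$. Consider the conditional gradient iteration $$d_k=\operatorname{argmin}_{y\in S}\{\partial_{y-x_k}\ell(x_k)\}-x_k,\qquad x_{k+1}=x_k+\alpha_kd_k,$$ with either constant step $\alpha_k=1$, or exact line search $\alpha_k\in\operatorname{argmin}\{\ell(x_k+\alpha d_k):\alpha\ge0,\ x_k+\alpha d_k\in S\}$. Let $v_0,\dots,v_K\in V$ with $(v_k,v_{k+1})\in E$ for $k<K$ and $v_K$ without outgoing edge, and let $x_0=e_{v_0}$. (a) If $\alpha_k=1$ for all $k$, then the minimizers defining $d_k$ are unique for $k<K$ and $x_k=e_{v_k}$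 for $k=0,\dots,K$. (b) If in addition $\omega_v>\omega_{vw}>\omega_w$ for all $(v,w)\in E$, then for either choice of step size (constant $1$ or exact line search) we have $x_k=e_{v_k}$ for $k\le K$, $x_k=e_{v_K}$ for all $k>K$, and $\ell(x_k)=\omega_{v_k}$ with $\omega_{v_0}>\omega_{v_1}>\cdots>\omega_{v_K}$.
   Context: For $v\ne w$ and $0<\mu\le 1$, $e^\mu_{vw}=(1-\mu)e_v+\mu e_w$, and the corner $S_v^\mu=\operatorname{conv}(\{e_v\}\cup\{e^\mu_{vw}:w\ne v\})$. $\partial_{y-x}\ell(x)=\lim_{h\to0,h\ge 0}\frac1h[\ell(x+h(y-x))-\ell(x)]$ is the one-sided directional derivative. (The graph models the execution of a deterministic Turing machine: vertices are machine configurations, edges are computation steps, vertices without outgoing edge are halting configurations.) *)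

theory Defs
  imports "HOL-Analysis.Analysis"
begin

definition ebas :: "'v::finite \<Rightarrow> real^'v" where
  "ebas v = axis v 1"

definition simplexV :: "(real^'v::finite) set" where
  "simplexV = convex hull (range ebas)"

definition emu :: "real \<Rightarrow> 'v::finite \<Rightarrow> 'v \<Rightarrow> real^'v" where
  "emu \<mu> v w = (1 - \<mu>) *\<^sub>R ebas v + \<mu> *\<^sub>R ebas w"

definition corner :: "'v::finite \<Rightarrow> real \<Rightarrow> (real^'v) set" where
  "corner v \<mu> = convex hull (insert (ebas v) {emu \<mu> v w | w. w \<noteq> v})"

definition affine_on :: "('a::real_vector) set \<Rightarrow> ('a \<Rightarrow> real) \<Rightarrow> bool" where
  "affine_on C f \<longleftrightarrow> (\<forall>x\<in>C. \<forall>y\<in>C. \<forall>t::real. 0 \<le> t \<and> t \<le> 1 \<longrightarrow>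
      f ((1 - t) *\<^sub>R x + t *\<^sub>R y) = (1 - t) * f x + t * f y)"

definition dirderiv :: "('a::real_vector \<Rightarrow> real) \<Rightarrow> 'a \<Rightarrow> 'a \<Rightarrow> real" where
  "dirderiv f x d = Lim (at_right 0) (\<lambda>h::real. (f (x + h *\<^sub>R d) - f x) / h)"

definition cg_minimizers :: "(real^'v::finite \<Rightarrow> real) \<Rightarrow> real^'v \<Rightarrow> (real^'v) set" where
  "cg_minimizers l x = {y \<in> simplexV. \<forall>z\<in>simplexV. dirderiv l x (y - x) \<le> dirderiv l x (z - x)}"

definition line_search :: "(real^'v::finite \<Rightarrow> real) \<Rightarrow> real^'v \<Rightarrow> real^'v \<Rightarrow> real set" where
  "line_search l x d = {a. a \<ge> 0 \<and> x + a *\<^sub>R d \<in> simplexV \<and>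
      (\<forall>b. b \<ge> 0 \<and> x + b *\<^sub>R d \<in> simplexV \<longrightarrow> l (x + a *\<^sub>R d) \<le> l (x + b *\<^sub>R d))}"

end

theory Submission
  imports Defs
begin

text \<open>
  Since l is affine on the corner S_v^{1/2}, its directional derivative at e_v towards y \<in> S is
  linear in y, with coefficient 2(\<omega>_vw - \<omega>_v) at e_w. Conditions (i)-(v) make the successor
  of v the unique steepest such vertex, so the linear minimisation oracle returns it; at a sink
  into which every edge descends all coefficients are positive and the iterate stays put.
  Along an edge v \<rightarrow> w the objective is piecewise affine through the midpoint, so under
  \<omega>_v > \<omega>_vw > \<omega>_w exact line search takes the full step.
\<close>

lemma ebas_nth: "ebas v $ i = (if i = v then 1 else 0)"
  by (simp add: ebas_def axis_def)

lemma ebas_in_simplexV: "ebas v \<in> simplexV"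
  unfolding simplexV_def by (rule hull_inc) simp

lemma simplexV_subset_standard_simplex:
  "simplexV \<subseteq> {x::real^'v::finite. (\<forall>i. 0 \<le> x $ i) \<and> (\<Sum>i\<in>UNIV. x $ i) = 1}"
  unfolding simplexV_def
proof (rule hull_minimal)
  show "convex {x::real^'v. (\<forall>i. 0 \<le> x $ i) \<and> (\<Sum>i\<in>UNIV. x $ i) = 1}"
    unfolding convex_def by (auto simp: sum.distrib sum_distrib_left[symmetric])
qed (auto simp: ebas_nth)

lemma simplexV_nonneg: "z \<in> simplexV \<Longrightarrow> 0 \<le> z $ i"
  using simplexV_subset_standard_simplex by blast

lemma simplexV_sum: "z \<in> simplexV \<Longrightarrow> (\<Sum>i\<in>UNIV. z $ i) = 1"
  using simplexV_subset_standard_simplex by blast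

lemma sum_ebas_nth_mult: "(\<Sum>w\<in>UNIV. ebas v $ w * c w) = c v"
  by (subst sum.remove[of UNIV v]) (auto simp: ebas_nth)

lemma sum_nth_scaleR_ebas: "(\<Sum>w\<in>UNIV. z $ w *\<^sub>R ebas w) = z"
  using basis_expansion[of z] by (simp add: ebas_def scalar_mult_eq_scaleR)

lemma simplexV_weighted_sum_shift:
  assumes "z \<in> simplexV"
  shows "(\<Sum>w\<in>UNIV. z $ w * c w) - c0 = (\<Sum>w\<in>UNIV. z $ w * (c w - c0))"
  using simplexV_sum[OF assms]
  by (simp add: right_diff_distrib sum_subtractf sum_distrib_right[symmetric])

lemma simplexV_weighted_sum_ge:
  assumes z: "z \<in> simplexV" and min: "\<And>w. c w0 \<le> c w"
  shows "c w0 \<le> (\<Sum>w\<in>UNIV. z $ w * c w)"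
proof -
  have "0 \<le> (\<Sum>w\<in>UNIV. z $ w * (c w - c w0))"
    using simplexV_nonneg[OF z] min by (intro sum_nonneg) simp
  then show ?thesis using simplexV_weighted_sum_shift[OF z, of c "c w0"] by simp
qed

lemma simplexV_weighted_sum_eq_min:
  assumes z: "z \<in> simplexV" and min: "\<And>w. w \<noteq> w0 \<Longrightarrow> c w0 < c w"
    and le: "(\<Sum>w\<in>UNIV. z $ w * c w) \<le> c w0"
  shows "z = ebas w0"
proof -
  have nonneg: "0 \<le> z $ w * (c w - c w0)" for w
    using simplexV_nonneg[OF z, of w] min[of w] by (cases "w = w0") auto
  have "(\<Sum>w\<in>UNIV. z $ w * (c w - c w0)) \<le> 0"
    using le simplexV_weighted_sum_shift[OF z, of c "c w0"] by simp
  then have "(\<Sum>w\<in>UNIV. z $ w * (c w - c w0)) = 0"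
    by (meson antisym nonneg sum_nonneg)
  then have "z $ w * (c w - c w0) = 0" for w
    using nonneg by (simp add: sum_nonneg_eq_0_iff)
  then have off: "z $ w = 0" if "w \<noteq> w0" for w
    using min[OF that] by force
  have "(\<Sum>w\<in>UNIV. z $ w) = z $ w0"
    using off by (subst sum.remove[of UNIV w0]) (auto intro: sum.neutral)
  then have "z $ w0 = 1" using simplexV_sum[OF z] by simp
  with off show ?thesis by (auto simp: vec_eq_iff ebas_nth)
qed

lemma affine_on_convex_combination:
  fixes a :: "'i \<Rightarrow> real"
  assumes "affine_on C f" "convex C" "finite I"
    and "(\<Sum>i\<in>I. a i) = 1" "\<And>i. i \<in> I \<Longrightarrow> 0 \<le> a i" "\<And>i. i \<in> I \<Longrightarrow> p i \<in> C"
  shows "f (\<Sum>i\<in>I. a i *\<^sub>R p i) = (\<Sum>i\<in>I. a i * f (p i))"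
proof -
  have two_point: "f (u *\<^sub>R x + v *\<^sub>R y) = u * f x + v * f y"
    if "x \<in> C" "y \<in> C" "0 \<le> u" "0 \<le> v" "u + v = 1" for x y u v
  proof -
    have u: "u = 1 - v" and "v \<le> 1" using that by auto
    then show ?thesis using assms(1) that unfolding u affine_on_def by blast
  qed
  have cvx: "convex_on C f" and concave: "convex_on C (\<lambda>x. - f x)"
    using assms(2) two_point unfolding convex_on_def by auto
  have ne: "I \<noteq> {}" using assms(4) by auto
  have "f (\<Sum>i\<in>I. a i *\<^sub>R p i) \<le> (\<Sum>i\<in>I. a i * f (p i))"
    by (rule convex_on_sum[OF assms(3) ne cvx]) (use assms(4-6) in auto)
  moreover have "- f (\<Sum>i\<in>I. a i *\<^sub>R p i) \<le> (\<Sum>i\<in>I. a i * - f (p i))"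
    by (rule convex_on_sum[OF assms(3) ne concave]) (use assms(4-6) in auto)
  ultimately show ?thesis by (simp add: sum_negf)
qed

lemma ebas_in_corner: "ebas v \<in> corner v \<mu>"
  unfolding corner_def by (rule hull_inc) simp

lemma midpoint_in_corner: "w \<noteq> v \<Longrightarrow> (1/2) *\<^sub>R (ebas v + ebas w) \<in> corner v (1/2)"
  unfolding corner_def by (rule hull_inc) (auto simp: emu_def scaleR_add_right)

lemma convex_corner: "convex (corner v \<mu>)"
  unfolding corner_def by (rule convex_convex_hull)

definition edge_slope :: "(real^'v::finite \<Rightarrow> real) \<Rightarrow> 'v \<Rightarrow> 'v \<Rightarrow> real" where
  "edge_slope l v w = 2 * (l ((1/2) *\<^sub>R (ebas v + ebas w)) - l (ebas v))"

lemma affine_corner_segment: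
  fixes l :: "real^'v::finite \<Rightarrow> real"
  assumes aff: "affine_on (corner v (1/2)) l"
    and y: "y \<in> simplexV" and h: "0 \<le> h" "h \<le> 1/2"
  shows "l (ebas v + h *\<^sub>R (y - ebas v)) = l (ebas v) + h * (\<Sum>w\<in>UNIV. y $ w * edge_slope l v w)"
proof -
  define m where "m w = (1/2) *\<^sub>R (ebas v + ebas w)" for w :: 'v
  define p where "p w = (1 - 2*h) *\<^sub>R ebas v + (2*h) *\<^sub>R m w" for w
  have m_in: "m w \<in> corner v (1/2)" for w
    using midpoint_in_corner[of w v] ebas_in_corner[of v "1/2"]
    by (cases "w = v") (auto simp: m_def scaleR_add_right[symmetric])
  have p_in: "p w \<in> corner v (1/2)" for w
    unfolding p_def using h ebas_in_corner m_in by (intro convexD_alt[OF convex_corner]) auto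
  have l_p: "l (p w) = l (ebas v) + 2*h * (l (m w) - l (ebas v))" for w
  proof -
    have "l (p w) = (1 - 2*h) * l (ebas v) + (2*h) * l (m w)"
      using aff m_in[of w] ebas_in_corner[of v "1/2"] h unfolding affine_on_def p_def by simp
    then show ?thesis by (simp add: algebra_simps)
  qed
  have "p w = (1 - h) *\<^sub>R ebas v + h *\<^sub>R ebas w" for w
    by (simp add: p_def m_def vec_eq_iff algebra_simps)
  then have "(\<Sum>w\<in>UNIV. y $ w *\<^sub>R p w)
      = (\<Sum>w\<in>UNIV. y $ w) *\<^sub>R ((1 - h) *\<^sub>R ebas v) + h *\<^sub>R (\<Sum>w\<in>UNIV. y $ w *\<^sub>R ebas w)"
    by (simp add: scaleR_add_right sum.distrib scaleR_sum_right scaleR_sum_left[symmetric]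
        sum_distrib_right[symmetric] mult.commute[of h])
  also have "\<dots> = ebas v + h *\<^sub>R (y - ebas v)"
    using simplexV_sum[OF y] by (simp add: sum_nth_scaleR_ebas algebra_simps)
  finally have "(\<Sum>w\<in>UNIV. y $ w *\<^sub>R p w) = ebas v + h *\<^sub>R (y - ebas v)" .
  then have "l (ebas v + h *\<^sub>R (y - ebas v)) = (\<Sum>w\<in>UNIV. y $ w * l (p w))"
    using affine_on_convex_combination[where I=UNIV and a="\<lambda>w. y $ w" and p=p,
        OF aff convex_corner finite] simplexV_sum[OF y] simplexV_nonneg[OF y] p_in
    by simp
  also have "\<dots> = (\<Sum>w\<in>UNIV. y $ w * l (ebas v) + h * (y $ w * (2 * (l (m w) - l (ebas v)))))"
    by (simp add: l_p algebra_simps)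
  also have "\<dots> = l (ebas v) + h * (\<Sum>w\<in>UNIV. y $ w * (2 * (l (m w) - l (ebas v))))"
    using simplexV_sum[OF y]
    by (simp only: sum.distrib sum_distrib_left[symmetric] sum_distrib_right[symmetric] mult_1)
  finally show ?thesis by (simp add: m_def edge_slope_def)
qed

lemma affine_corner_edge:
  fixes l :: "real^'v::finite \<Rightarrow> real"
  assumes "affine_on (corner v (1/2)) l" "0 \<le> h" "h \<le> 1/2"
  shows "l (ebas v + h *\<^sub>R (ebas w - ebas v)) = l (ebas v) + h * edge_slope l v w"
  using affine_corner_segment[OF assms(1) ebas_in_simplexV assms(2,3)] by (simp add: sum_ebas_nth_mult)

lemma dirderiv_ebas:
  fixes l :: "real^'v::finite \<Rightarrow> real"
  assumes aff: "affine_on (corner v (1/2)) l" and y: "y \<in> simplexV"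
  shows "dirderiv l (ebas v) (y - ebas v) = (\<Sum>w\<in>UNIV. y $ w * edge_slope l v w)"
proof -
  let ?D = "\<Sum>w\<in>UNIV. y $ w * edge_slope l v w"
  have "\<forall>\<^sub>F h in at_right 0. h \<in> {0::real<..<1/2}"
    by (rule eventually_at_right_real) simp
  then have "\<forall>\<^sub>F h in at_right 0. (l (ebas v + h *\<^sub>R (y - ebas v)) - l (ebas v)) / h = ?D"
    by eventually_elim (simp add: affine_corner_segment[OF aff y])
  then have "((\<lambda>h. (l (ebas v + h *\<^sub>R (y - ebas v)) - l (ebas v)) / h) \<longlongrightarrow> ?D) (at_right 0)"
    by (rule tendsto_eventually)
  then show ?thesis
    unfolding dirderiv_def by (rule tendsto_Lim[rotated]) simp
qed

lemma cg_minimizers_ebas: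
  fixes l :: "real^'v::finite \<Rightarrow> real"
  assumes aff: "affine_on (corner v (1/2)) l"
    and steepest: "\<And>w. w \<noteq> u \<Longrightarrow> edge_slope l v u < edge_slope l v w"
  shows "cg_minimizers l (ebas v) = {ebas u}"
proof -
  note D = dirderiv_ebas[OF aff]
  have D_u: "dirderiv l (ebas v) (ebas u - ebas v) = edge_slope l v u"
    using D[OF ebas_in_simplexV] by (simp add: sum_ebas_nth_mult)
  have min: "edge_slope l v u \<le> edge_slope l v w" for w
    using steepest[of w] by (cases "w = u") auto
  show ?thesis
  proof (intro set_eqI iffI)
    fix y assume "y \<in> cg_minimizers l (ebas v)"
    then have "y \<in> simplexV" "(\<Sum>w\<in>UNIV. y $ w * edge_slope l v w) \<le> edge_slope l v u"
      using D D_u ebas_in_simplexV[of u] unfolding cg_minimizers_def by force+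
    then show "y \<in> {ebas u}"
      using simplexV_weighted_sum_eq_min steepest by blast
  next
    fix y assume "y \<in> {ebas u}"
    then show "y \<in> cg_minimizers l (ebas v)"
      using D D_u simplexV_weighted_sum_ge[where c="edge_slope l v", OF _ min] ebas_in_simplexV
      unfolding cg_minimizers_def by auto
  qed
qed

lemma line_search_along_descending_edge:
  fixes l :: "real^'v::finite \<Rightarrow> real" and v w :: 'v
  defines "m \<equiv> (1/2) *\<^sub>R (ebas v + ebas w)"
  assumes vw: "v \<noteq> w"
    and aff_v: "affine_on (corner v (1/2)) l" and aff_w: "affine_on (corner w (1/2)) l"
    and descent: "l (ebas w) < l m" "l m < l (ebas v)"
    and a: "a \<in> line_search l (ebas v) (ebas w - ebas v)"
  shows "a = 1"
proof (rule ccontr)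
  assume "a \<noteq> 1"
  let ?p = "ebas v + a *\<^sub>R (ebas w - ebas v)"
  have "0 \<le> a" and "?p \<in> simplexV"
    and le_w: "l ?p \<le> l (ebas w)"
    using a ebas_in_simplexV[of w] unfolding line_search_def by (auto dest!: spec[of _ 1])
  moreover have "0 \<le> ?p $ v" using simplexV_nonneg[OF \<open>?p \<in> simplexV\<close>] .
  ultimately have "0 \<le> a" "a < 1" using vw \<open>a \<noteq> 1\<close> by (auto simp: ebas_nth)
  have slope_v: "edge_slope l v w = 2 * (l m - l (ebas v))"
    by (simp add: edge_slope_def m_def)
  have slope_w: "edge_slope l w v = 2 * (l m - l (ebas w))"
    by (simp add: edge_slope_def m_def add.commute)
  have "l (ebas w) < l ?p"
  proof (cases "a \<le> 1/2")
    case True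
    have "l ?p = l (ebas v) + (2 * a) * (l m - l (ebas v))"
      using affine_corner_edge[OF aff_v \<open>0 \<le> a\<close> True] slope_v by simp
    moreover have "(1 - 2 * a) * (l m - l (ebas v)) \<le> 0"
      using True descent by (intro mult_nonneg_nonpos) auto
    ultimately show ?thesis
      using descent by (simp add: algebra_simps)
  next
    case False
    have "?p = ebas w + (1 - a) *\<^sub>R (ebas v - ebas w)"
      by (simp add: algebra_simps)
    then have "l ?p = l (ebas w) + (2 * (1 - a)) * (l m - l (ebas w))"
      using affine_corner_edge[OF aff_w, of "1 - a" v] False \<open>a < 1\<close> slope_w
      by (simp add: algebra_simps)
    moreover have "0 < (2 * (1 - a)) * (l m - l (ebas w))"
      using \<open>a < 1\<close> descent by simp
    ultimately show ?thesis by simp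
  qed
  with le_w show False by simp
qed

locale cg_graph_instance =
  fixes E :: "('v::finite \<times> 'v) set"
    and \<omega>1 :: "'v \<Rightarrow> real" and \<omega>2 :: "'v \<Rightarrow> 'v \<Rightarrow> real" and B :: real
    and l :: "real^'v \<Rightarrow> real"
  assumes noloop: "\<And>v. (v, v) \<notin> E"
    and outdeg: "\<And>v w w'. (v, w) \<in> E \<Longrightarrow> (v, w') \<in> E \<Longrightarrow> w = w'"
    and w_i: "\<And>v w. (v, w) \<in> E \<Longrightarrow> \<omega>1 v > \<omega>2 v w"
    and w_ii: "\<And>u v w. (u, v) \<in> E \<Longrightarrow> (v, w) \<in> E \<Longrightarrow> \<omega>2 u v > \<omega>2 v w"
    and w_iii: "\<And>v w. v \<noteq> w \<Longrightarrow> (v, w) \<notin> E \<Longrightarrow> (w, v) \<notin> E \<Longrightarrow> \<omega>2 v w = B"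
    and w_iv: "\<And>v w. v \<noteq> w \<Longrightarrow> \<omega>2 v w = \<omega>2 w v"
    and w_v1: "\<And>v. \<omega>1 v < B"
    and w_v2: "\<And>v w. (v, w) \<in> E \<Longrightarrow> \<omega>2 v w < B"
    and l_vert: "\<And>v. l (ebas v) = \<omega>1 v"
    and l_mid: "\<And>v w. v \<noteq> w \<Longrightarrow> l ((1/2) *\<^sub>R (ebas v + ebas w)) = \<omega>2 v w"
    and l_aff: "\<And>v. affine_on (corner v (1/2)) l"
begin

lemma edge_slope_eq: "w \<noteq> v \<Longrightarrow> edge_slope l v w = 2 * (\<omega>2 v w - \<omega>1 v)"
  by (simp add: edge_slope_def l_mid l_vert)

lemma edge_slope_self: "edge_slope l v v = 0"
  by (simp add: edge_slope_def scaleR_add_right[symmetric])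

lemma cg_minimizers_along_edge:
  assumes e: "(v, u) \<in> E"
  shows "cg_minimizers l (ebas v) = {ebas u}"
proof (rule cg_minimizers_ebas[OF l_aff])
  fix w assume "w \<noteq> u"
  have "u \<noteq> v" using e noloop by blast
  have "\<omega>2 v u < \<omega>2 v w" if "w \<noteq> v"
  proof -
    consider "(w, v) \<in> E" | "(v, w) \<notin> E" "(w, v) \<notin> E"
      using outdeg[OF _ e] \<open>w \<noteq> u\<close> by blast
    then show ?thesis
    proof cases
      case 1
      then show ?thesis using w_ii[OF 1 e] w_iv[OF that] by simp
    next
      case 2
      then show ?thesis using w_iii[OF that[symmetric]] w_v2[OF e] by simp
    qed
  qed
  then show "edge_slope l v u < edge_slope l v w"
    using w_i[OF e] \<open>u \<noteq> v\<close>
    by (cases "w = v") (auto simp: edge_slope_eq edge_slope_self)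
qed

lemma cg_minimizers_at_sink:
  assumes sink: "\<And>u. (v, u) \<notin> E"
    and descent_into: "\<And>u. (u, v) \<in> E \<Longrightarrow> \<omega>2 u v > \<omega>1 v"
  shows "cg_minimizers l (ebas v) = {ebas v}"
proof (rule cg_minimizers_ebas[OF l_aff])
  fix w assume "w \<noteq> v"
  have "\<omega>1 v < \<omega>2 v w"
  proof (cases "(w, v) \<in> E")
    case True
    then show ?thesis using descent_into[OF True] w_iv[OF \<open>w \<noteq> v\<close>] by simp
  next
    case False
    then show ?thesis using w_iii[OF \<open>w \<noteq> v\<close>[symmetric] sink] w_v1 by auto
  qed
  then show "edge_slope l v v < edge_slope l v w"
    using \<open>w \<noteq> v\<close> by (simp add: edge_slope_eq edge_slope_self)
qed

lemma cg_step_along_edge: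
  assumes e: "(v, u) \<in> E" and y: "y \<in> cg_minimizers l (ebas v)"
    and step_size: "\<alpha> = 1 \<or> \<omega>2 v u > \<omega>1 u \<and> \<alpha> \<in> line_search l (ebas v) (y - ebas v)"
  shows "ebas v + \<alpha> *\<^sub>R (y - ebas v) = ebas u"
proof -
  have y_eq: "y = ebas u" using y cg_minimizers_along_edge[OF e] by simp
  have "u \<noteq> v" using e noloop by blast
  have "\<alpha> = 1"
    using step_size
  proof
    assume "\<omega>2 v u > \<omega>1 u \<and> \<alpha> \<in> line_search l (ebas v) (y - ebas v)"
    then show "\<alpha> = 1"
      using line_search_along_descending_edge[OF \<open>u \<noteq> v\<close>[symmetric] l_aff l_aff] w_i[OF e]
        l_mid[OF \<open>u \<noteq> v\<close>[symmetric]] l_vert y_eq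
      by auto
  qed
  with y_eq show ?thesis by simp
qed

lemma cg_iterates_follow_path:
  assumes path: "\<And>k. k < K \<Longrightarrow> (vs k, vs (Suc k)) \<in> E"
    and x0: "x 0 = ebas (vs 0)"
    and y: "\<And>k. y k \<in> cg_minimizers l (x k)"
    and step: "\<And>k. x (Suc k) = x k + \<alpha> k *\<^sub>R (y k - x k)"
    and step_size: "\<And>k. k < K \<Longrightarrow> \<alpha> k = 1 \<or>
      \<omega>2 (vs k) (vs (Suc k)) > \<omega>1 (vs (Suc k)) \<and> \<alpha> k \<in> line_search l (x k) (y k - x k)"
  shows "k \<le> K \<Longrightarrow> x k = ebas (vs k)"
proof (induction k)
  case 0
  show ?case using x0 by simp
next
  case (Suc k)
  then have "k < K" and xk: "x k = ebas (vs k)" by simp_all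
  moreover have "y k \<in> cg_minimizers l (ebas (vs k))" using y[of k] xk by simp
  ultimately show ?case
    using cg_step_along_edge[OF path] step_size[of k] step[of k] by simp
qed

lemma cg_iterates_stay_at_sink:
  assumes sink: "\<And>u. (v, u) \<notin> E"
    and descent_into: "\<And>u. (u, v) \<in> E \<Longrightarrow> \<omega>2 u v > \<omega>1 v"
    and xK: "x K = ebas v"
    and y: "\<And>k. y k \<in> cg_minimizers l (x k)"
    and step: "\<And>k. x (Suc k) = x k + \<alpha> k *\<^sub>R (y k - x k)"
  shows "K \<le> k \<Longrightarrow> x k = ebas v"
proof (induction k rule: dec_induct)
  case base
  then show ?case using xK .
next
  case (step k)
  then show ?case
    using y[of k] cg_minimizers_at_sink[OF sink descent_into] \<open>x (Suc k) = _\<close> by simp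
qed

end

theorem mainTheorem2:
  fixes E :: "('v::finite \<times> 'v) set"
    and \<omega>1 :: "'v \<Rightarrow> real" and \<omega>2 :: "'v \<Rightarrow> 'v \<Rightarrow> real" and B :: real
    and l :: "real^'v \<Rightarrow> real"
    and vs :: "nat \<Rightarrow> 'v" and K :: nat
  assumes noloop: "\<And>v. (v, v) \<notin> E"
    and outdeg: "\<And>v w w'. (v, w) \<in> E \<Longrightarrow> (v, w') \<in> E \<Longrightarrow> w = w'"
    and w_i: "\<And>v w. (v, w) \<in> E \<Longrightarrow> \<omega>1 v > \<omega>2 v w"
    and w_ii: "\<And>u v w. (u, v) \<in> E \<Longrightarrow> (v, w) \<in> E \<Longrightarrow> \<omega>2 u v > \<omega>2 v w"
    and w_iii: "\<And>v w. v \<noteq> w \<Longrightarrow> (v, w) \<notin> E \<Longrightarrow> (w, v) \<notin> E \<Longrightarrow> \<omega>2 v w = B"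
    and w_iv: "\<And>v w. v \<noteq> w \<Longrightarrow> \<omega>2 v w = \<omega>2 w v"
    and w_v1: "\<And>v. \<omega>1 v < B"
    and w_v2: "\<And>v w. (v, w) \<in> E \<Longrightarrow> \<omega>2 v w < B"
    and l_vert: "\<And>v. l (ebas v) = \<omega>1 v"
    and l_mid: "\<And>v w. v \<noteq> w \<Longrightarrow> l ((1/2) *\<^sub>R (ebas v + ebas w)) = \<omega>2 v w"
    and l_aff: "\<And>v. affine_on (corner v (1/2)) l"
    and path: "\<And>k. k < K \<Longrightarrow> (vs k, vs (Suc k)) \<in> E"
    and path_end: "\<And>w. (vs K, w) \<notin> E"
  shows "(\<forall>(x :: nat \<Rightarrow> real^'v) (y :: nat \<Rightarrow> real^'v).
            x 0 = ebas (vs 0)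
            \<and> (\<forall>k. y k \<in> cg_minimizers l (x k))
            \<and> (\<forall>k. x (Suc k) = x k + (1::real) *\<^sub>R (y k - x k))
          \<longrightarrow> (\<forall>k<K. cg_minimizers l (x k) = {y k})
            \<and> (\<forall>k\<le>K. x k = ebas (vs k)))
       \<and> ((\<forall>v w. (v, w) \<in> E \<longrightarrow> \<omega>1 v > \<omega>2 v w \<and> \<omega>2 v w > \<omega>1 w) \<longrightarrow>
          (\<forall>(x :: nat \<Rightarrow> real^'v) (y :: nat \<Rightarrow> real^'v) (\<alpha> :: nat \<Rightarrow> real).
            x 0 = ebas (vs 0)
            \<and> (\<forall>k. y k \<in> cg_minimizers l (x k))
            \<and> (\<forall>k. x (Suc k) = x k + \<alpha> k *\<^sub>R (y k - x k))
            \<and> ((\<forall>k. \<alpha> k = 1) \<or> (\<forall>k. \<alpha> k \<in> line_search l (x k) (y k - x k)))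
          \<longrightarrow> (\<forall>k\<le>K. x k = ebas (vs k))
            \<and> (\<forall>k>K. x k = ebas (vs K))
            \<and> (\<forall>k\<le>K. l (x k) = \<omega>1 (vs k))
            \<and> (\<forall>k<K. \<omega>1 (vs k) > \<omega>1 (vs (Suc k)))))"
proof -
  interpret cg_graph_instance E \<omega>1 \<omega>2 B l
    by (unfold_locales; fact noloop outdeg w_i w_ii w_iii w_iv w_v1 w_v2 l_vert l_mid l_aff)
  show ?thesis
  proof (intro conjI; intro allI impI; elim conjE)
    fix x y :: "nat \<Rightarrow> real^'v"
    assume x0: "x 0 = ebas (vs 0)" and y: "\<forall>k. y k \<in> cg_minimizers l (x k)"
      and step: "\<forall>k. x (Suc k) = x k + (1::real) *\<^sub>R (y k - x k)"
    have on_path: "x k = ebas (vs k)" if "k \<le> K" for k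
      by (rule cg_iterates_follow_path[where \<alpha>="\<lambda>_. 1"]) (use path x0 y step that in auto)
    moreover have "cg_minimizers l (x k) = {y k}" if "k < K" for k
      using on_path[of k] cg_minimizers_along_edge[OF path[OF that]] y[rule_format, of k] that
      by auto
    ultimately show "(\<forall>k<K. cg_minimizers l (x k) = {y k}) \<and> (\<forall>k\<le>K. x k = ebas (vs k))"
      by blast
  next
    fix x y :: "nat \<Rightarrow> real^'v" and \<alpha> :: "nat \<Rightarrow> real"
    assume descent: "\<forall>v w. (v, w) \<in> E \<longrightarrow> \<omega>2 v w < \<omega>1 v \<and> \<omega>1 w < \<omega>2 v w"
      and x0: "x 0 = ebas (vs 0)" and y: "\<forall>k. y k \<in> cg_minimizers l (x k)"
      and step: "\<forall>k. x (Suc k) = x k + \<alpha> k *\<^sub>R (y k - x k)"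
      and step_size: "(\<forall>k. \<alpha> k = 1) \<or> (\<forall>k. \<alpha> k \<in> line_search l (x k) (y k - x k))"
    have on_path: "x k = ebas (vs k)" if "k \<le> K" for k
      by (rule cg_iterates_follow_path[where \<alpha>=\<alpha>])
        (use path x0 y step step_size descent that in auto)
    moreover have "x k = ebas (vs K)" if "K \<le> k" for k
      by (rule cg_iterates_stay_at_sink[where \<alpha>=\<alpha>, OF path_end])
        (use on_path y step descent that in auto)
    moreover have "\<omega>1 (vs (Suc k)) < \<omega>1 (vs k)" if "k < K" for k
      using descent path[OF that] by fastforce
    ultimately show "(\<forall>k\<le>K. x k = ebas (vs k)) \<and> (\<forall>k>K. x k = ebas (vs K))
      \<and> (\<forall>k\<le>K. l (x k) = \<omega>1 (vs k)) \<and> (\<forall>k<K. \<omega>1 (vs (Suc k)) < \<omega>1 (vs k))"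
      using l_vert by simp
  qed
qed

end
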